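(* Let $H$ be a history generated by KSFTM and $T_i$ a transaction of $H$. If (after the last event of $H$) $tutl_i < ct_i$, then there exists a transaction $T_j$ committed in $H$ with $wts_j > wts_i$.
   Context: Algorithm KSFTM (parameters $K\ge1$, $C>0$, $incVal\ge1$). Global atomic counter $G\_tCntr$, initially 1. Each t-object $x$ stores at most $K$ versions $\langle ts, val, rl, vrt\rangle$; initially $\langle 0,0,\emptyset,0\rangle$; a version with timestamp $ts>0$ is installed only by a committing transaction $T_j$ as $\langle wts_j, v, \emptyset, tltl_j\rangle$. Transaction $T_i$ has $its_i, cts_i, wts_i$, limits $tltl_i, tutl_i$, commit time $ct_i$, flag $valid_i$, status. begin($its$): $cts_i$ := counter value, counter atomically incremented; $its_i := cts_i$ if $its$ nil else $its$; $wts_i := cts_i + C(cts_i-its_i)$; $tltl_i := cts_i$; $tutl_i := ct_i := \infty$. read($x$) (non-local): $cur$ := version with largest $ts < wts_i$ (abort if none); if a version $next$ with smallest $ts>wts_i$ exists, $tutl_i := \min(tutl_i, next.vrt-1)$; $tltl_i := \max(tltl_i, cur.vrt+1)$; abort if $tltl_i > tutl_i$; otherwise record the read in $cur.rl$. tryC: abort if $valid_i$ false; for written $x$: $prev_x$ (largest $ts<wts_i$, abort if none), $next_x$ (smallest $ts>wts_i$); conflict checks against readers of $prev_x$ with larger $wts$ (abort $T_i$ or mark them); $tltl_i := \max(tltl_i, prev_x.vrt+1)$, $tutl_i := \min(tutl_i, next_x.vrt-1)$; $ct_i$ := counter atomically increased by $incVal$ (new value); $tutl_i := \min(tutl_i,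 ct_i)$; abort if $tltl_i > tutl_i$; checks against readers $T_k$ of $prev_x$ with smaller $wts$ and $tltl_k \ge tutl_i$ (abort $T_i$ or mark $T_k$); then $tltl_i := tutl_i$; for such unaborted readers $T_k$, $tutl_k := \min(tutl_k, tltl_i-1)$; invalidate marked transactions; install for each written $x$ the version $\langle wts_i, v, \emptyset, tltl_i\rangle$; commit. abort: $valid_i$ false, status abort. *)

theory Defs
  imports Main "HOL-Library.Extended_Real"
begin

text \<open>Transactions are identified by natural numbers, t-objects have type 'x,
  values have type 'v (with initial value 0).  Each operation
  (begin, read, write, tryC, abort) is one atomic step.\<close>

datatype status = Live | Committed | Aborted

record 'v version =
  vts  :: real
  vval :: 'v
  vrl  :: "nat set"
  vvrt :: ereal

record ('x, 'v) txn =
  t_its    :: nat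
  t_cts    :: nat
  t_wts    :: real
  t_tltl   :: ereal
  t_tutl   :: ereal
  t_ct     :: ereal
  t_valid  :: bool
  t_status :: status
  t_wset   :: "'x \<Rightarrow> 'v option"

record ('x, 'v) state =
  cntr  :: nat
  store :: "'x \<Rightarrow> 'v version set"
  txs   :: "nat \<Rightarrow> ('x, 'v) txn option"

datatype ('x, 'v) event =
    Begin nat
  | Read nat 'x 'v
  | ReadAbort nat 'x
  | Write nat 'x 'v
  | Commit nat
  | TryCAbort nat
  | AbortEv nat

definition init_state :: "('x, 'v::zero) state" where
  "init_state = \<lparr> cntr = 1,
     store = (\<lambda>x. {\<lparr>vts = 0, vval = 0, vrl = {}, vvrt = 0\<rparr>}),
     txs = (\<lambda>i. None) \<rparr>"

definition has_prev :: "'v version set \<Rightarrow> real \<Rightarrow> bool" where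
  "has_prev V w \<longleftrightarrow> (\<exists>u\<in>V. vts u < w)"

definition is_prev :: "'v version set \<Rightarrow> real \<Rightarrow> 'v version \<Rightarrow> bool" where
  "is_prev V w c \<longleftrightarrow> c \<in> V \<and> vts c < w \<and> (\<forall>u\<in>V. vts u < w \<longrightarrow> vts u \<le> vts c)"

definition prev_v :: "'v version set \<Rightarrow> real \<Rightarrow> 'v version" where
  "prev_v V w = (SOME c. is_prev V w c)"

definition is_next :: "'v version set \<Rightarrow> real \<Rightarrow> 'v version \<Rightarrow> bool" where
  "is_next V w c \<longleftrightarrow> c \<in> V \<and> w < vts c \<and> (\<forall>u\<in>V. w < vts u \<longrightarrow> vts c \<le> vts u)"

definition nxt_lim :: "'v version set \<Rightarrow> real \<Rightarrow> ereal" where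
  "nxt_lim V w = (if \<exists>c. is_next V w c then vvrt (SOME c. is_next V w c) - 1 else \<infinity>)"

definition abort_tx :: "('x, 'v) txn \<Rightarrow> ('x, 'v) txn" where
  "abort_tx t = t\<lparr>t_valid := False, t_status := Aborted\<rparr>"

definition wset_dom :: "('x, 'v) txn \<Rightarrow> 'x set" where
  "wset_dom t = {x. t_wset t x \<noteq> None}"

definition lo_lim :: "('x, 'v) state \<Rightarrow> 'x set \<Rightarrow> real \<Rightarrow> ereal" where
  "lo_lim s S w = (SUP x\<in>S. vvrt (prev_v (store s x) w) + 1)"

definition hi_lim :: "('x, 'v) state \<Rightarrow> 'x set \<Rightarrow> real \<Rightarrow> ereal" where
  "hi_lim s S w = (INF x\<in>S. nxt_lim (store s x) w)"

definition readers :: "('x, 'v) state \<Rightarrow> 'x set \<Rightarrow> real \<Rightarrow> nat set" where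
  "readers s S w = (\<Union>x\<in>S. vrl (prev_v (store s x) w))"

definition trimK :: "nat \<Rightarrow> 'v version set \<Rightarrow> 'v version set" where
  "trimK K V = (if card V > K then V - {SOME u. u \<in> V \<and> (\<forall>v\<in>V. vts u \<le> vts v)} else V)"

definition upd_tx :: "('x, 'v) state \<Rightarrow> nat \<Rightarrow> ('x, 'v) txn \<Rightarrow> ('x, 'v) state" where
  "upd_tx s i t = s\<lparr>txs := (txs s)(i \<mapsto> t)\<rparr>"

inductive ksftm_step ::
  "nat \<Rightarrow> real \<Rightarrow> nat \<Rightarrow> ('x, 'v) state \<Rightarrow> ('x, 'v) event \<Rightarrow> ('x, 'v) state \<Rightarrow> bool"
  for K :: nat and C :: real and incVal :: nat where
  begin_new:
    "txs s i = None \<Longrightarrow>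
     ksftm_step K C incVal s (Begin i)
       (s\<lparr>cntr := cntr s + 1,
          txs := (txs s)(i \<mapsto> \<lparr> t_its = cntr s, t_cts = cntr s, t_wts = real (cntr s),
             t_tltl = ereal (real (cntr s)), t_tutl = \<infinity>, t_ct = \<infinity>, t_valid = True,
             t_status = Live, t_wset = (\<lambda>x. None) \<rparr>)\<rparr>)"
| begin_retry:
    "\<lbrakk> txs s i = None; txs s k = Some tk; t_status tk = Aborted; its = t_its tk \<rbrakk> \<Longrightarrow>
     ksftm_step K C incVal s (Begin i)
       (s\<lparr>cntr := cntr s + 1,
          txs := (txs s)(i \<mapsto> \<lparr> t_its = its, t_cts = cntr s,
             t_wts = real (cntr s) + C * (real (cntr s) - real its),
             t_tltl = ereal (real (cntr s)), t_tutl = \<infinity>, t_ct = \<infinity>, t_valid = True,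
             t_status = Live, t_wset = (\<lambda>x. None) \<rparr>)\<rparr>)"
| read_local:
    "\<lbrakk> txs s i = Some t; t_status t = Live; t_wset t x = Some v \<rbrakk> \<Longrightarrow>
     ksftm_step K C incVal s (Read i x v) s"
| read_noprev:
    "\<lbrakk> txs s i = Some t; t_status t = Live; t_wset t x = None;
       \<not> has_prev (store s x) (t_wts t) \<rbrakk> \<Longrightarrow>
     ksftm_step K C incVal s (ReadAbort i x) (upd_tx s i (abort_tx t))"
| read_abort:
    "\<lbrakk> txs s i = Some t; t_status t = Live; t_wset t x = None;
       has_prev (store s x) (t_wts t);
       c = prev_v (store s x) (t_wts t);
       tl' = max (t_tltl t) (vvrt c + 1);
       tu' = min (t_tutl t) (nxt_lim (store s x) (t_wts t));
       tl' > tu' \<rbrakk> \<Longrightarrow>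
     ksftm_step K C incVal s (ReadAbort i x)
       (upd_tx s i (abort_tx (t\<lparr>t_tltl := tl', t_tutl := tu'\<rparr>)))"
| read_ok:
    "\<lbrakk> txs s i = Some t; t_status t = Live; t_wset t x = None;
       has_prev (store s x) (t_wts t);
       c = prev_v (store s x) (t_wts t);
       tl' = max (t_tltl t) (vvrt c + 1);
       tu' = min (t_tutl t) (nxt_lim (store s x) (t_wts t));
       tl' \<le> tu' \<rbrakk> \<Longrightarrow>
     ksftm_step K C incVal s (Read i x (vval c))
       (upd_tx (s\<lparr>store := (store s)(x := (store s x - {c}) \<union> {c\<lparr>vrl := insert i (vrl c)\<rparr>})\<rparr>)
          i (t\<lparr>t_tltl := tl', t_tutl := tu'\<rparr>))"
| write_step:
    "\<lbrakk> txs s i = Some t; t_status t = Live \<rbrakk> \<Longrightarrow>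
     ksftm_step K C incVal s (Write i x v) (upd_tx s i (t\<lparr>t_wset := (t_wset t)(x \<mapsto> v)\<rparr>))"
| tryc_invalid:
    "\<lbrakk> txs s i = Some t; t_status t = Live; \<not> t_valid t \<rbrakk> \<Longrightarrow>
     ksftm_step K C incVal s (TryCAbort i) (upd_tx s i (abort_tx t))"
| tryc_abort_early:
    "\<lbrakk> txs s i = Some t; t_status t = Live; t_valid t;
       S \<subseteq> wset_dom t; \<forall>x\<in>S. has_prev (store s x) (t_wts t) \<rbrakk> \<Longrightarrow>
     ksftm_step K C incVal s (TryCAbort i)
       (upd_tx s i (abort_tx (t\<lparr>t_tltl := max (t_tltl t) (lo_lim s S (t_wts t)),
                                t_tutl := min (t_tutl t) (hi_lim s S (t_wts t))\<rparr>)))"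
| tryc_abort_late:
    "\<lbrakk> txs s i = Some t; t_status t = Live; t_valid t; W = wset_dom t;
       \<forall>x\<in>W. has_prev (store s x) (t_wts t);
       tl1 = max (t_tltl t) (lo_lim s W (t_wts t));
       ctv = cntr s + incVal;
       tu2 = min (min (t_tutl t) (hi_lim s W (t_wts t))) (ereal (real ctv)) \<rbrakk> \<Longrightarrow>
     ksftm_step K C incVal s (TryCAbort i)
       (upd_tx (s\<lparr>cntr := ctv\<rparr>) i
          (abort_tx (t\<lparr>t_tltl := tl1, t_tutl := tu2, t_ct := ereal (real ctv)\<rparr>)))"
| tryc_commit:
    "\<lbrakk> txs s i = Some t; t_status t = Live; t_valid t; W = wset_dom t; w = t_wts t;
       \<forall>x\<in>W. has_prev (store s x) w;
       tl1 = max (t_tltl t) (lo_lim s W w);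
       ctv = cntr s + incVal;
       tu2 = min (min (t_tutl t) (hi_lim s W w)) (ereal (real ctv));
       tl1 \<le> tu2;
       R = readers s W w;
       \<forall>k\<in>M. k \<in> R \<and> k \<noteq> i \<and> (\<exists>tk. txs s k = Some tk \<and> t_status tk = Live \<and>
                 (t_wts tk > w \<or> (t_wts tk < w \<and> t_tltl tk \<ge> tu2))) \<rbrakk> \<Longrightarrow>
     ksftm_step K C incVal s (Commit i)
       (s\<lparr>cntr := ctv,
          store := (\<lambda>x. if x \<in> W
                        then trimK K (insert \<lparr>vts = w, vval = the (t_wset t x), vrl = {}, vvrt = tu2\<rparr>
                                               (store s x))
                        else store s x),
          txs := (\<lambda>k. if k = i
                       then Some (t\<lparr>t_tltl := tu2, t_tutl := tu2, t_ct := ereal (real ctv),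
                                     t_status := Committed\<rparr>)
                       else map_option (\<lambda>tk. tk\<lparr>
                              t_valid := (t_valid tk \<and> k \<notin> M),
                              t_tutl := (if k \<in> R \<and> k \<notin> M \<and> t_wts tk < w \<and> t_status tk \<noteq> Aborted
                                         then min (t_tutl tk) (tu2 - 1) else t_tutl tk)\<rparr>)
                            (txs s k))\<rparr>)"
| abort_step:
    "\<lbrakk> txs s i = Some t; t_status t = Live \<rbrakk> \<Longrightarrow>
     ksftm_step K C incVal s (AbortEv i) (upd_tx s i (abort_tx t))"

inductive ksftm_exec ::
  "nat \<Rightarrow> real \<Rightarrow> nat \<Rightarrow> ('x, 'v) state \<Rightarrow> ('x, 'v) event list \<Rightarrow> ('x, 'v) state \<Rightarrow> bool"
  for K :: nat and C :: real and incVal :: nat where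
  exec_nil: "ksftm_exec K C incVal s [] s"
| exec_snoc: "\<lbrakk> ksftm_exec K C incVal s H s'; ksftm_step K C incVal s' e s'' \<rbrakk> \<Longrightarrow>
              ksftm_exec K C incVal s (H @ [e]) s''"

definition ksftm_history ::
  "nat \<Rightarrow> real \<Rightarrow> nat \<Rightarrow> ('x, 'v::zero) event list \<Rightarrow> ('x, 'v) state \<Rightarrow> bool" where
  "ksftm_history K C incVal H s \<longleftrightarrow> ksftm_exec K C incVal init_state H s"

end

theory Submission
  imports Defs
begin

text \<open>The upper limit tutl of a transaction drops below its commit time ct only when it is
  intersected with a limit read off a version whose timestamp exceeds the transaction's wts, or,
  for a reader constrained by a committing writer, with the limit of that writer, whose wts is
  larger. Versions with positive timestamp are installed only by committing transactions, and
  committed transactions stay committed. So every step preserves the invariant that tutl < ct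
  implies the existence of a committed transaction with larger wts.\<close>

definition has_committed_at :: "('x, 'v) state \<Rightarrow> real \<Rightarrow> bool" where
  "has_committed_at s w \<longleftrightarrow>
     (\<exists>j tj. txs s j = Some tj \<and> t_status tj = Committed \<and> t_wts tj = w)"

definition has_committed_above :: "('x, 'v) state \<Rightarrow> real \<Rightarrow> bool" where
  "has_committed_above s w \<longleftrightarrow>
     (\<exists>j tj. txs s j = Some tj \<and> t_status tj = Committed \<and> t_wts tj > w)"

text \<open>Positivity of wts keeps the initial versions, with timestamp 0, below every transaction.\<close>

definition txn_ok :: "('x, 'v) state \<Rightarrow> ('x, 'v) txn \<Rightarrow> bool" where
  "txn_ok s t \<longleftrightarrow> t_its t \<le> cntr s \<and> 0 < t_wts t \<and>
     (t_status t = Live \<longrightarrow> t_ct t = \<infinity>) \<and>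
     (t_tutl t < t_ct t \<longrightarrow> has_committed_above s (t_wts t))"

definition version_ok :: "('x, 'v) state \<Rightarrow> 'v version \<Rightarrow> bool" where
  "version_ok s u \<longleftrightarrow> vts u \<le> 0 \<or> has_committed_at s (vts u)"

text \<open>Finiteness of the stores makes prev_v an actual element of the store, so that a read, which
  replaces that element, does not create a new timestamp.\<close>

definition ksftm_inv :: "('x, 'v) state \<Rightarrow> bool" where
  "ksftm_inv s \<longleftrightarrow> 1 \<le> cntr s \<and> (\<forall>x. finite (store s x)) \<and>
     (\<forall>i t. txs s i = Some t \<longrightarrow> txn_ok s t) \<and>
     (\<forall>x u. u \<in> store s x \<longrightarrow> version_ok s u)"

lemma ksftm_invD:
  assumes "ksftm_inv s"
  shows "1 \<le> cntr s" "finite (store s x)" "txs s i = Some t \<Longrightarrow> txn_ok s t"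
    "u \<in> store s x \<Longrightarrow> version_ok s u"
  using assms unfolding ksftm_inv_def by blast+

lemma nxt_lim_less_PInfty_imp_later_version:
  assumes "nxt_lim V w < \<infinity>"
  shows "\<exists>u\<in>V. w < vts u"
proof -
  have "\<exists>c. is_next V w c" using assms unfolding nxt_lim_def by (auto split: if_splits)
  then show ?thesis unfolding is_next_def by auto
qed

lemma hi_lim_less_PInfty_imp_later_version:
  assumes "hi_lim s S w < \<infinity>"
  shows "\<exists>x. \<exists>u\<in>store s x. w < vts u"
proof -
  obtain x where "x \<in> S" "nxt_lim (store s x) w < \<infinity>"
    using assms unfolding hi_lim_def INF_less_iff by blast
  then show ?thesis using nxt_lim_less_PInfty_imp_later_version by blast
qed

lemma min_less_imp_less_or_finite: "min a L < c \<Longrightarrow> a < c \<or> L < (\<infinity>::ereal)"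
  using less_le_trans[of L c \<infinity>] by (auto simp: min_less_iff_disj)

lemma min_nxt_lim_less_imp:
  "min a (nxt_lim (store s x) w) < c \<Longrightarrow> a < c \<or> (\<exists>x. \<exists>u\<in>store s x. w < vts u)"
  using min_less_imp_less_or_finite nxt_lim_less_PInfty_imp_later_version by blast

lemma min_hi_lim_less_imp:
  "min a (hi_lim s S w) < c \<Longrightarrow> a < c \<or> (\<exists>x. \<exists>u\<in>store s x. w < vts u)"
  using min_less_imp_less_or_finite hi_lim_less_PInfty_imp_later_version by blast

lemma min_hi_lim_less_bound_imp:
  assumes "min (min a (hi_lim s S w)) c < c"
  shows "a < \<infinity> \<or> (\<exists>x. \<exists>u\<in>store s x. w < vts u)"
proof -
  have "min a (hi_lim s S w) < c" using assms by (auto simp: min_less_iff_disj)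
  then show ?thesis using min_hi_lim_less_imp less_le_trans[of a c \<infinity>] by force
qed

lemma prev_v_mem:
  assumes "finite V" "has_prev V w"
  shows "prev_v V w \<in> V"
proof -
  let ?A = "{u\<in>V. vts u < w}"
  have "finite (vts ` ?A)" "vts ` ?A \<noteq> {}"
    using assms unfolding has_prev_def by auto
  then have "Max (vts ` ?A) \<in> vts ` ?A" by (rule Max_in)
  then obtain c where "c \<in> ?A" "vts c = Max (vts ` ?A)" by auto
  then have "is_prev V w c"
    unfolding is_prev_def using \<open>finite (vts ` ?A)\<close> by auto
  then have "is_prev V w (prev_v V w)" unfolding prev_v_def by (rule someI)
  then show ?thesis unfolding is_prev_def by simp
qed

lemma trimK_subset: "trimK K V \<subseteq> V"
  unfolding trimK_def by auto

lemma step_cntr_mono: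
  "ksftm_step K C incVal s e s' \<Longrightarrow> cntr s \<le> cntr s'"
  by (cases rule: ksftm_step.cases) (auto simp: upd_tx_def)

lemma step_keeps_committed:
  assumes "ksftm_step K C incVal s e s'" "txs s j = Some tj" "t_status tj = Committed"
  shows "\<exists>tj'. txs s' j = Some tj' \<and> t_status tj' = Committed \<and> t_wts tj' = t_wts tj"
  using assms by (cases rule: ksftm_step.cases) (auto simp: upd_tx_def abort_tx_def)

lemma step_has_committed_above:
  "ksftm_step K C incVal s e s' \<Longrightarrow> has_committed_above s w \<Longrightarrow> has_committed_above s' w"
  unfolding has_committed_above_def by (metis step_keeps_committed)

lemma step_has_committed_at:
  "ksftm_step K C incVal s e s' \<Longrightarrow> has_committed_at s w \<Longrightarrow> has_committed_at s' w"
  unfolding has_committed_at_def by (metis step_keeps_committed)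

lemma step_finite_store:
  assumes "ksftm_step K C incVal s e s'" "\<forall>x. finite (store s x)"
  shows "finite (store s' x)"
  using assms
proof (cases rule: ksftm_step.cases)
  case tryc_commit
  then show ?thesis using assms(2) by (auto intro: finite_subset[OF trimK_subset])
qed (auto simp: upd_tx_def)

lemma step_version_origin:
  assumes "ksftm_step K C incVal s e s'" "u \<in> store s' x" "\<forall>y. finite (store s y)"
  shows "(\<exists>u0\<in>store s x. vts u0 = vts u) \<or> has_committed_at s' (vts u)"
  using assms
proof (cases rule: ksftm_step.cases)
  case (read_ok i t x' c)
  then have "c \<in> store s x'" using prev_v_mem assms(3) by blast
  then show ?thesis using assms(2) read_ok by (auto simp: upd_tx_def split: if_splits)
next
  case (tryc_commit i t W w)
  then show ?thesis using assms(2) trimK_subset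
    by (fastforce simp: has_committed_at_def split: if_splits)
qed (auto simp: upd_tx_def)

lemma step_version_ok:
  assumes "ksftm_inv s" "ksftm_step K C incVal s e s'" "u \<in> store s' x"
  shows "version_ok s' u"
  using step_version_origin[OF assms(2,3)] ksftm_invD[OF assms(1)]
    step_has_committed_at[OF assms(2)]
  unfolding version_ok_def by metis

lemma later_version_imp_has_committed_above:
  assumes "ksftm_inv s" "u \<in> store s x" "w < vts u" "0 < w"
  shows "has_committed_above s w"
  using ksftm_invD(4)[OF assms(1,2)] assms(3,4)
  unfolding version_ok_def has_committed_at_def has_committed_above_def by force

lemma txn_ok_step_update:
  assumes inv: "ksftm_inv s" and st: "ksftm_step K C incVal s e s'" and t: "txs s i = Some t"
    and same: "t_its t' = t_its t" "t_wts t' = t_wts t"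
    and live: "t_status t' = Live \<Longrightarrow> t_status t = Live \<and> t_ct t' = t_ct t"
    and tutl: "t_tutl t' < t_ct t' \<Longrightarrow>
      t_tutl t < t_ct t \<or> (\<exists>x. \<exists>u\<in>store s x. t_wts t < vts u) \<or> has_committed_above s' (t_wts t)"
  shows "txn_ok s' t'"
proof -
  have ok: "txn_ok s t" using ksftm_invD(3)[OF inv t] .
  have "has_committed_above s' (t_wts t)" if "t_tutl t' < t_ct t'"
    using tutl[OF that] ok later_version_imp_has_committed_above[OF inv]
      step_has_committed_above[OF st]
    unfolding txn_ok_def by blast
  then show ?thesis
    using ok same live step_cntr_mono[OF st] unfolding txn_ok_def by auto
qed

fun event_txn :: "('x, 'v) event \<Rightarrow> nat" where
  "event_txn (Begin i) = i"
| "event_txn (Read i x v) = i"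
| "event_txn (ReadAbort i x) = i"
| "event_txn (Write i x v) = i"
| "event_txn (Commit i) = i"
| "event_txn (TryCAbort i) = i"
| "event_txn (AbortEv i) = i"

lemma step_txs_bystander:
  assumes "ksftm_step K C incVal s e s'" "j \<noteq> event_txn e" "\<forall>i. e \<noteq> Commit i"
  shows "txs s' j = txs s j"
  using assms by (cases rule: ksftm_step.cases) (auto simp: upd_tx_def)

lemma txn_ok_bystander:
  assumes inv: "ksftm_inv s" and st: "ksftm_step K C incVal s e s'"
    and t': "txs s' j = Some t'" and j: "j \<noteq> event_txn e"
  shows "txn_ok s' t'"
proof (cases "\<exists>i. e = Commit i")
  case False
  then have "txs s j = Some t'" using step_txs_bystander[OF st j] t' by auto
  then show ?thesis by (rule txn_ok_step_update[OF inv st]) simp_all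
next
  case True
  then obtain i where "e = Commit i" by blast
  with st show ?thesis
  proof (cases rule: ksftm_step.cases)
    case (tryc_commit i' t W w tl1 ctv tu2 R M)
    then obtain tk where tk: "txs s j = Some tk" and t'_def: "t' = tk\<lparr>
        t_valid := (t_valid tk \<and> j \<notin> M),
        t_tutl := (if j \<in> R \<and> j \<notin> M \<and> t_wts tk < w \<and> t_status tk \<noteq> Aborted
                   then min (t_tutl tk) (tu2 - 1) else t_tutl tk)\<rparr>"
      using t' j \<open>e = Commit i\<close> by auto
    have above: "has_committed_above s' (t_wts tk)" if "t_wts tk < w"
      using tryc_commit that unfolding has_committed_above_def by auto
    show ?thesis
      by (rule txn_ok_step_update[OF inv st tk])
        (use above in \<open>auto simp: t'_def split: if_splits\<close>)
  qed simp_all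
qed

lemma txn_ok_actor:
  assumes inv: "ksftm_inv s" and C: "0 \<le> C" and st: "ksftm_step K C incVal s e s'"
    and t': "txs s' (event_txn e) = Some t'"
  shows "txn_ok s' t'"
  using st
proof (cases rule: ksftm_step.cases)
  case begin_new
  then show ?thesis using t' ksftm_invD(1)[OF inv] by (auto simp: txn_ok_def)
next
  case (begin_retry i k tk its)
  then have "its \<le> cntr s" using ksftm_invD(3)[OF inv] by (auto simp: txn_ok_def)
  then have "real (cntr s) \<le> real (cntr s) + C * (real (cntr s) - real its)"
    using C by simp
  then show ?thesis using t' begin_retry ksftm_invD(1)[OF inv] \<open>its \<le> cntr s\<close>
    by (auto simp: txn_ok_def)
next
  case (read_local i t)
  then show ?thesis using t' ksftm_invD(3)[OF inv] by simp
next
  case (read_abort i t x c tl' tu')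
  then have t'_def: "t' = abort_tx (t\<lparr>t_tltl := tl', t_tutl := tu'\<rparr>)"
    using t' by (simp add: upd_tx_def)
  show ?thesis
    by (rule txn_ok_step_update[OF inv st \<open>txs s i = Some t\<close>])
      (use min_nxt_lim_less_imp[of "t_tutl t" s x "t_wts t" "t_ct t"] read_abort
        in \<open>auto simp: t'_def abort_tx_def\<close>)
next
  case (read_ok i t x c tl' tu')
  then have t'_def: "t' = t\<lparr>t_tltl := tl', t_tutl := tu'\<rparr>"
    using t' by (simp add: upd_tx_def)
  show ?thesis
    by (rule txn_ok_step_update[OF inv st \<open>txs s i = Some t\<close>])
      (use min_nxt_lim_less_imp[of "t_tutl t" s x "t_wts t" "t_ct t"] read_ok
        in \<open>auto simp: t'_def\<close>)
next
  case (tryc_abort_early i t S)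
  then have t'_def: "t' = abort_tx (t\<lparr>t_tltl := max (t_tltl t) (lo_lim s S (t_wts t)),
                                      t_tutl := min (t_tutl t) (hi_lim s S (t_wts t))\<rparr>)"
    using t' by (simp add: upd_tx_def)
  show ?thesis
    by (rule txn_ok_step_update[OF inv st \<open>txs s i = Some t\<close>])
      (use min_hi_lim_less_imp[of "t_tutl t" s S "t_wts t" "t_ct t"]
        in \<open>auto simp: t'_def abort_tx_def\<close>)
next
  case (tryc_abort_late i t W tl1 ctv tu2)
  then have t'_def: "t' = abort_tx (t\<lparr>t_tltl := tl1, t_tutl := tu2, t_ct := ereal (real ctv)\<rparr>)"
    using t' by (simp add: upd_tx_def)
  have "t_ct t = \<infinity>"
    using ksftm_invD(3)[OF inv \<open>txs s i = Some t\<close>] tryc_abort_late by (simp add: txn_ok_def)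
  then show ?thesis
    by (intro txn_ok_step_update[OF inv st \<open>txs s i = Some t\<close>])
      (use min_hi_lim_less_bound_imp[of "t_tutl t" s W "t_wts t" "ereal (real ctv)"] tryc_abort_late
        in \<open>auto simp: t'_def abort_tx_def\<close>)
next
  case (tryc_commit i t W w tl1 ctv tu2)
  then have t'_def: "t' = t\<lparr>t_tltl := tu2, t_tutl := tu2, t_ct := ereal (real ctv),
                            t_status := Committed\<rparr>"
    using t' by simp
  have "t_ct t = \<infinity>"
    using ksftm_invD(3)[OF inv \<open>txs s i = Some t\<close>] tryc_commit by (simp add: txn_ok_def)
  then show ?thesis
    by (intro txn_ok_step_update[OF inv st \<open>txs s i = Some t\<close>])
      (use min_hi_lim_less_bound_imp[of "t_tutl t" s W "t_wts t" "ereal (real ctv)"] tryc_commit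
        in \<open>auto simp: t'_def\<close>)
  \<comment> \<open>the remaining steps change neither tutl nor ct\<close>
qed (use t' txn_ok_step_update[OF inv st] in \<open>force simp: upd_tx_def abort_tx_def\<close>)+

lemma step_ksftm_inv:
  assumes inv: "ksftm_inv s" and C: "0 \<le> C" and st: "ksftm_step K C incVal s e s'"
  shows "ksftm_inv s'"
  unfolding ksftm_inv_def
proof (intro conjI allI impI)
  show "1 \<le> cntr s'" using ksftm_invD(1)[OF inv] step_cntr_mono[OF st] by simp
  show "finite (store s' x)" for x
    using step_finite_store[OF st] ksftm_invD(2)[OF inv] by blast
  show "txn_ok s' t" if "txs s' j = Some t" for j t
    using that txn_ok_actor[OF inv C st] txn_ok_bystander[OF inv st]
    by (cases "j = event_txn e") auto
  show "version_ok s' u" if "u \<in> store s' x" for x u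
    using step_version_ok[OF inv st that] .
qed

lemma exec_ksftm_inv:
  "ksftm_exec K C incVal s0 H s \<Longrightarrow> ksftm_inv s0 \<Longrightarrow> 0 \<le> C \<Longrightarrow> ksftm_inv s"
  by (induction rule: ksftm_exec.induct) (auto intro: step_ksftm_inv)

lemma ksftm_inv_init: "ksftm_inv (init_state :: ('x, 'v::zero) state)"
  unfolding ksftm_inv_def version_ok_def init_state_def by simp

theorem lemma15:
  fixes K :: nat and C :: real and incVal :: nat
    and H :: "('x, 'v::zero) event list" and s :: "('x, 'v) state"
  assumes "K \<ge> 1" and "C > 0" and "incVal \<ge> 1"
    and "ksftm_history K C incVal H s"
    and "txs s i = Some ti"
    and "t_tutl ti < t_ct ti"
  shows "\<exists>j tj. txs s j = Some tj \<and> t_status tj = Committed \<and> t_wts tj > t_wts ti"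
proof -
  have "ksftm_inv s"
    using exec_ksftm_inv[OF assms(4)[unfolded ksftm_history_def] ksftm_inv_init] assms(2)
    by simp
  then have "txn_ok s ti" using assms(5) by (rule ksftm_invD(3))
  then show ?thesis using assms(6) unfolding txn_ok_def has_committed_above_def by blast
qed

end
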